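(* Let $B\in\mathbb R^{n\times n}$ be symmetrizable and let $S=\mathrm{diag}(s_1,\dots,s_n)$ be positive definite. Order the (real) eigenvalues of $B$, $BS$, $SB$ and $S^{1/2}BS^{1/2}$ nondecreasingly. Then for every $k\in\{1,\dots,n\}$ there exists $\theta_k\in[\min_i s_i,\max_i s_i]$ such that $$\lambda_k(BS)=\lambda_k(SB)=\lambda_k(S^{1/2}BS^{1/2})=\theta_k\lambda_k(B).$$
   Context: A matrix $B\in\mathbb R^{n\times n}$ is (diagonally) symmetrizable if $DB$ is symmetric for some diagonal matrix $D$ with positive diagonal entries. $S^{1/2}$ denotes the diagonal positive definite square root of $S$. *)

theory Defs
  imports "Jordan_Normal_Form.Char_Poly"
begin

definition pos_diag_mat :: "nat \<Rightarrow> real mat \<Rightarrow> bool" where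
  "pos_diag_mat n D \<longleftrightarrow> D \<in> carrier_mat n n \<and> diagonal_mat D \<and> (\<forall>i<n. D $$ (i,i) > 0)"

definition symmetrizable :: "nat \<Rightarrow> real mat \<Rightarrow> bool" where
  "symmetrizable n B \<longleftrightarrow> (\<exists>D. pos_diag_mat n D \<and> transpose_mat (D * B) = D * B)"

definition diag_sqrt :: "real mat \<Rightarrow> real mat" where
  "diag_sqrt S = mat (dim_row S) (dim_col S) (\<lambda>(i,j). if i = j then sqrt (S $$ (i,i)) else 0)"

definition sorted_eigenvalues :: "real mat \<Rightarrow> real list" where
  "sorted_eigenvalues A = (THE xs. sorted xs \<and> char_poly A = (\<Prod>x\<leftarrow>xs. [:- x, 1:]))"

end

theory Submission
  imports Defs "Jordan_Normal_Form.Schur_Decomposition"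
begin

text \<open>
  If \<open>D B\<close> is symmetric for a positive diagonal \<open>D\<close>, then \<open>A = D\<^sup>1\<^sup>/\<^sup>2 B D\<^sup>-\<^sup>1\<^sup>/\<^sup>2\<close> is symmetric
  and similar to \<open>B\<close>. Diagonal matrices commute, so \<open>R A R\<close> with \<open>R = S\<^sup>1\<^sup>/\<^sup>2\<close> is similar
  to \<open>R B R\<close>, which in turn is similar to \<open>B S\<close> and to \<open>S B\<close>. It therefore suffices to
  prove Ostrowski's theorem for the congruence \<open>R A R\<close> of a real symmetric matrix.

  By Courant--Fischer, \<open>\<lambda>\<^sub>k(A) < t\<close> iff the Rayleigh quotient of \<open>A\<close> stays below \<open>t\<close> on
  some \<open>(k+1)\<close>-dimensional subspace. The image of such a subspace under \<open>R\<inverse>\<close> is one on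
  which the Rayleigh quotient of \<open>R A R\<close> stays below \<open>max (s\<^sub>m\<^sub>i\<^sub>n t) (s\<^sub>m\<^sub>a\<^sub>x t)\<close>, whence
  \<open>\<lambda>\<^sub>k(R A R) \<le> max (s\<^sub>m\<^sub>i\<^sub>n \<lambda>\<^sub>k(A)) (s\<^sub>m\<^sub>a\<^sub>x \<lambda>\<^sub>k(A))\<close>. The same argument for
  \<open>A = R\<inverse> (R A R) R\<inverse>\<close> gives the reverse bound, and together they say that
  \<open>\<lambda>\<^sub>k(R A R) = \<theta> \<lambda>\<^sub>k(A)\<close> for some \<open>\<theta>\<close> between \<open>s\<^sub>m\<^sub>i\<^sub>n\<close> and \<open>s\<^sub>m\<^sub>a\<^sub>x\<close>.
\<close>

lemma scalar_prod_self_nonneg: "0 \<le> (v :: 'a::linordered_ring_strict vec) \<bullet> v"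
  unfolding scalar_prod_def by (intro sum_nonneg) simp

lemma scalar_prod_self_sum:
  "(x :: 'a::comm_semiring_1 vec) \<in> carrier_vec n \<Longrightarrow> x \<bullet> x = (\<Sum>i<n. (x $ i)\<^sup>2)"
  unfolding scalar_prod_def by (intro sum.cong) (auto simp: power2_eq_square)

lemma dim_mat_diag [simp]: "dim_row (mat_diag n f) = n" "dim_col (mat_diag n f) = n"
  unfolding mat_diag_def by simp_all

lemma mat_diag_cong:
  "(\<And>i. i < n \<Longrightarrow> f i = g i) \<Longrightarrow> mat_diag n f = mat_diag n g"
  unfolding mat_diag_def by (intro eq_matI) auto

lemma mat_diag_mult_vec:
  assumes "y \<in> carrier_vec n"
  shows "mat_diag n f *\<^sub>v y = vec n (\<lambda>i. f i * y $ i)"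
  using assms
  by (intro eq_vecI) (simp_all add: mat_diag_def scalar_prod_def if_distrib[of "\<lambda>x. x * _"] cong: if_cong)

lemma index_mat_diag_conj:
  "X \<in> carrier_mat n n \<Longrightarrow> i < n \<Longrightarrow> j < n \<Longrightarrow>
    (mat_diag n f * X * mat_diag n g) $$ (i, j) = f i * X $$ (i, j) * g j"
  by (simp add: mat_diag_mult_left[of X n n] mat_diag_mult_right[of _ n n])

lemma mat_diag_conj_conj:
  fixes X :: "'a::comm_semiring_0 mat"
  assumes X: "X \<in> carrier_mat n n"
  shows "mat_diag n f * (mat_diag n g * X * mat_diag n h) * mat_diag n k
    = mat_diag n (\<lambda>i. f i * g i) * X * mat_diag n (\<lambda>i. h i * k i)"
proof (rule eq_matI)
  fix i j
  assume "i < dim_row (mat_diag n (\<lambda>i. f i * g i) * X * mat_diag n (\<lambda>i. h i * k i))"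
    and "j < dim_col (mat_diag n (\<lambda>i. f i * g i) * X * mat_diag n (\<lambda>i. h i * k i))"
  then have i: "i < n" and j: "j < n" by simp_all
  have inner: "mat_diag n g * X * mat_diag n h \<in> carrier_mat n n"
    using X by (simp add: mult_carrier_mat[of _ n n _ n])
  show "(mat_diag n f * (mat_diag n g * X * mat_diag n h) * mat_diag n k) $$ (i, j)
      = (mat_diag n (\<lambda>i. f i * g i) * X * mat_diag n (\<lambda>i. h i * k i)) $$ (i, j)"
    unfolding index_mat_diag_conj[OF inner i j] index_mat_diag_conj[OF X i j] by (simp add: ac_simps)
qed simp_all

lemma transpose_mat_diag_conj:
  fixes A :: "'a::comm_semiring_0 mat"
  assumes "A \<in> carrier_mat n n"
  shows "transpose_mat (mat_diag n d * A * mat_diag n d) = mat_diag n d * transpose_mat A * mat_diag n d"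
proof (rule eq_matI)
  fix i j
  assume "i < dim_row (mat_diag n d * transpose_mat A * mat_diag n d)"
    and "j < dim_col (mat_diag n d * transpose_mat A * mat_diag n d)"
  then have i: "i < n" and j: "j < n" by simp_all
  have "transpose_mat (mat_diag n d * A * mat_diag n d) $$ (i, j) = d j * A $$ (j, i) * d i"
    using index_mat_diag_conj[OF assms j i] i j by simp
  also have "\<dots> = (mat_diag n d * transpose_mat A * mat_diag n d) $$ (i, j)"
    using index_mat_diag_conj[of "transpose_mat A" n i j] assms i j by (simp add: ac_simps)
  finally show "transpose_mat (mat_diag n d * A * mat_diag n d) $$ (i, j)
      = (mat_diag n d * transpose_mat A * mat_diag n d) $$ (i, j)" .
qed simp_all

lemma mat_diag_cancel_left:
  fixes f g :: "nat \<Rightarrow> 'a::semiring_1"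
  assumes "\<And>i. i < n \<Longrightarrow> f i * g i = 1" and "U \<in> carrier_mat n m"
  shows "mat_diag n f * (mat_diag n g * U) = U"
  using assms by (intro eq_matI) (auto simp: mat_diag_mult_left[of _ n m] mult.assoc[symmetric])

lemma scalar_prod_mat_diag_mult_vec:
  fixes x y :: "'a::comm_semiring_0 vec"
  shows "x \<in> carrier_vec n \<Longrightarrow> y \<in> carrier_vec n \<Longrightarrow> x \<bullet> (mat_diag n f *\<^sub>v y) = (mat_diag n f *\<^sub>v x) \<bullet> y"
  by (auto simp: mat_diag_mult_vec scalar_prod_def ac_simps intro!: sum.cong)

lemma similar_mat_diag_conj:
  fixes X :: "'a::field mat"
  assumes X: "X \<in> carrier_mat n n" and nonzero: "\<And>i. i < n \<Longrightarrow> p i \<noteq> 0"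
  shows "similar_mat (mat_diag n p * X * mat_diag n (\<lambda>i. 1 / p i)) X"
proof -
  have "mat_diag n p * mat_diag n (\<lambda>i. 1 / p i) = 1\<^sub>m n"
    and "mat_diag n (\<lambda>i. 1 / p i) * mat_diag n p = 1\<^sub>m n"
    using nonzero by (auto simp: mat_diag_cong[of n _ "\<lambda>_. 1"])
  then have "similar_mat_wit (mat_diag n p * X * mat_diag n (\<lambda>i. 1 / p i)) X
      (mat_diag n p) (mat_diag n (\<lambda>i. 1 / p i))"
    using X by (intro similar_mat_witI[of _ _ n]) (auto simp: mult_carrier_mat[of _ n n _ n])
  then show ?thesis
    unfolding similar_mat_def by blast
qed

lemma pos_diag_mat_eq_mat_diag:
  assumes "pos_diag_mat n S"
  shows "S = mat_diag n (\<lambda>i. S $$ (i, i))" and "diag_sqrt S = mat_diag n (\<lambda>i. sqrt (S $$ (i, i)))"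
  using assms unfolding pos_diag_mat_def diagonal_mat_def diag_sqrt_def mat_diag_def
  by (auto intro!: eq_matI)

lemma pos_diag_mat_diagonal_bounds:
  assumes "pos_diag_mat n S"
  shows "0 < n \<Longrightarrow> 0 < Min {S $$ (i, i) | i. i < n}"
    and "i < n \<Longrightarrow> Min {S $$ (i, i) | i. i < n} \<le> S $$ (i, i)"
    and "i < n \<Longrightarrow> S $$ (i, i) \<le> Max {S $$ (i, i) | i. i < n}"
proof -
  have diagonal: "{S $$ (i, i) | i. i < n} = (\<lambda>i. S $$ (i, i)) ` {..<n}"
    by auto
  have "0 < S $$ (i, i)" if "i < n" for i
    using assms that unfolding pos_diag_mat_def by auto
  then show "0 < n \<Longrightarrow> 0 < Min {S $$ (i, i) | i. i < n}"
    unfolding diagonal by (subst Min_gr_iff) auto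
  show "i < n \<Longrightarrow> Min {S $$ (i, i) | i. i < n} \<le> S $$ (i, i)"
    and "i < n \<Longrightarrow> S $$ (i, i) \<le> Max {S $$ (i, i) | i. i < n}"
    unfolding diagonal by simp_all
qed

lemma order_prod_linear_factors:
  "Polynomial.order a (\<Prod>x\<leftarrow>xs. [:- x, 1::'a::idom:]) = count (mset xs) a"
proof (induction xs)
  case Nil
  then show ?case by (simp add: order_0I)
next
  case (Cons x xs)
  have split: "(\<Prod>y\<leftarrow>x # xs. [:- y, 1:]) = [:- x, 1:] * (\<Prod>y\<leftarrow>xs. [:- y, 1::'a:])"
    by simp
  have nonzero: "[:- x, 1:] * (\<Prod>y\<leftarrow>xs. [:- y, 1::'a:]) \<noteq> 0"
    unfolding split[symmetric] prod_list_zero_iff by auto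
  show ?case
    unfolding split order_mult[OF nonzero] using Cons.IH by (simp add: order_linear')
qed

lemma sorted_eigenvalues_eqI:
  assumes "sorted xs" and "char_poly A = (\<Prod>x\<leftarrow>xs. [:- x, 1:])"
  shows "sorted_eigenvalues A = xs"
  unfolding sorted_eigenvalues_def
proof (rule the_equality)
  fix ys assume ys: "sorted ys \<and> char_poly A = (\<Prod>x\<leftarrow>ys. [:- x, 1:])"
  have "mset ys = mset xs"
    by (rule multiset_eqI) (metis ys assms(2) order_prod_linear_factors)
  then show "ys = xs" using ys assms(1) by (metis properties_for_sort)
qed (use assms in simp)

lemma sorted_eigenvalues_sort:
  assumes "char_poly A = (\<Prod>x\<leftarrow>xs. [:- x, 1:])"
  shows "sorted_eigenvalues A = sort xs"
  by (rule sorted_eigenvalues_eqI) (simp_all add: assms prod_mset_prod_list[symmetric])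

lemma sorted_eigenvalues_similar:
  "similar_mat A B \<Longrightarrow> sorted_eigenvalues A = sorted_eigenvalues B"
  unfolding sorted_eigenvalues_def by (simp add: char_poly_similar)

section \<open>Spectral theorem for real symmetric matrices\<close>

lemma symmetric_eigen_equation_real:
  fixes b :: "nat \<Rightarrow> nat \<Rightarrow> real" and v :: "nat \<Rightarrow> complex"
  assumes symmetric: "\<And>i j. i < n \<Longrightarrow> j < n \<Longrightarrow> b i j = b j i"
    and eigen: "\<And>i. i < n \<Longrightarrow> (\<Sum>j<n. of_real (b i j) * v j) = a * v i"
    and nonzero: "i0 < n" "v i0 \<noteq> 0"
  shows "cnj a = a"
proof -
  \<comment> \<open>\<open>v\<^sup>* b v\<close> equals \<open>a |v|\<^sup>2\<close> and, as \<open>b\<close> is real symmetric, its own conjugate\<close>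
  define q where "q = (\<Sum>i<n. cnj (v i) * (\<Sum>j<n. of_real (b i j) * v j))"
  define N where "N = (\<Sum>i<n. (cmod (v i))\<^sup>2)"
  have "q = (\<Sum>i<n. cnj (v i) * (a * v i))"
    unfolding q_def by (rule sum.cong[OF refl]) (simp only: eigen lessThan_iff)
  also have "\<dots> = a * of_real N"
    unfolding N_def of_real_sum complex_norm_square sum_distrib_left by (simp add: ac_simps)
  finally have q: "q = a * of_real N" .
  have "cnj q = (\<Sum>i<n. \<Sum>j<n. of_real (b i j) * (v i * cnj (v j)))"
    unfolding q_def by (simp add: sum_distrib_left ac_simps)
  also have "\<dots> = (\<Sum>j<n. \<Sum>i<n. of_real (b i j) * (v i * cnj (v j)))"
    by (rule sum.swap)
  also have "\<dots> = q"
    unfolding q_def by (simp add: sum_distrib_left ac_simps symmetric)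
  finally have "cnj a * of_real N = a * of_real N"
    unfolding q by simp
  moreover have "0 < N"
    unfolding N_def using nonzero by (intro sum_pos2[of _ i0]) auto
  ultimately show ?thesis by simp
qed

interpretation of_real_poly_hom: map_poly_inj_idom_hom "of_real :: real \<Rightarrow> complex" ..

lemma real_symmetric_char_poly_splits:
  fixes A :: "real mat"
  assumes A: "A \<in> carrier_mat n n" and symmetric: "transpose_mat A = A"
  shows "\<exists>es. char_poly A = (\<Prod>x\<leftarrow>es. [:- x, 1:])"
proof -
  define Ac where "Ac = map_mat complex_of_real A"
  have Ac: "Ac \<in> carrier_mat n n" using A unfolding Ac_def by simp
  obtain as where as: "char_poly Ac = (\<Prod>a\<leftarrow>as. [:- a, 1:])"
    using char_poly_factorized[OF Ac] by blast
  have real: "cnj a = a" if "a \<in> set as" for a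
  proof -
    have "poly (char_poly Ac) a = 0"
      unfolding as poly_prod_list using that by (auto simp: prod_list_zero_iff)
    then have "eigenvalue Ac a" using eigenvalue_root_char_poly[OF Ac] by simp
    then obtain v where v: "v \<in> carrier_vec n" "v \<noteq> 0\<^sub>v n" "Ac *\<^sub>v v = a \<cdot>\<^sub>v v"
      unfolding eigenvalue_def eigenvector_def using Ac by auto
    from v(1,2) obtain i0 where "i0 < n" "v $ i0 \<noteq> 0"
      by (metis carrier_vecD eq_vecI index_zero_vec)
    then show ?thesis
    proof (rule symmetric_eigen_equation_real[of n "\<lambda>i j. A $$ (i,j)" "\<lambda>j. v $ j" a, rotated 2])
      show "A $$ (i, j) = A $$ (j, i)" if "i < n" "j < n" for i j
        using that A symmetric by (metis carrier_matD index_transpose_mat(1))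
      show "(\<Sum>j<n. complex_of_real (A $$ (i, j)) * v $ j) = a * v $ i" if i: "i < n" for i
        using arg_cong[OF v(3), of "\<lambda>w. w $ i"] i v(1) A
        by (auto simp: Ac_def scalar_prod_def atLeast0LessThan)
    qed
  qed
  have "map_poly of_real (\<Prod>x\<leftarrow>map Re as. [:- x, 1:]) = (\<Prod>x\<leftarrow>map Re as. [:- complex_of_real x, 1:])"
    by (simp only: of_real_poly_hom.hom_prod_list map_map o_def) simp
  also have "\<dots> = (\<Prod>a\<leftarrow>as. [:- a, 1:])"
    using real by (induction as) (simp_all add: Reals_cnj_iff[symmetric])
  also have "\<dots> = map_poly of_real (char_poly A)"
    unfolding as[symmetric] Ac_def by (rule of_real_hom.char_poly_hom[OF A])
  finally have "(\<Prod>x\<leftarrow>map Re as. [:- x, 1:]) = char_poly A"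
    by (rule of_real_poly_hom.injectivity)
  then show ?thesis by (rule exI[of _ "map Re as", OF sym])
qed

definition orthonormal_mat :: "nat \<Rightarrow> 'a::comm_ring_1 mat \<Rightarrow> bool" where
  "orthonormal_mat n Q \<longleftrightarrow> Q \<in> carrier_mat n n \<and> transpose_mat Q * Q = 1\<^sub>m n"

lemma orthonormal_mat_right_inverse:
  fixes Q :: "'a::field mat"
  assumes "orthonormal_mat n Q"
  shows "Q * transpose_mat Q = 1\<^sub>m n"
  using assms mat_mult_left_right_inverse[of "transpose_mat Q" n Q]
  unfolding orthonormal_mat_def by auto

lemma orthonormal_mat_mult:
  assumes "orthonormal_mat n W" and "orthonormal_mat n P"
  shows "orthonormal_mat n (W * P)"
proof -
  have W: "W \<in> carrier_mat n n" and P: "P \<in> carrier_mat n n"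
    using assms unfolding orthonormal_mat_def by auto
  have "transpose_mat (W * P) * (W * P) = transpose_mat P * ((transpose_mat W * W) * P)"
    using W P by (simp add: transpose_mult[OF W P] assoc_mult_mat[of _ n n _ n _ n])
  then show ?thesis
    using assms W P unfolding orthonormal_mat_def by auto
qed

lemma conj_transpose_mult:
  fixes W P D :: "'a::comm_ring_1 mat"
  assumes "W \<in> carrier_mat n n" "P \<in> carrier_mat n n" "D \<in> carrier_mat n n"
  shows "W * (P * D * transpose_mat P) * transpose_mat W = W * P * D * transpose_mat (W * P)"
  using assms by (simp add: transpose_mult[of W n n P] assoc_mult_mat[of _ n n _ n _ n])

lemma orthonormal_mat_of_cols_normalized:
  fixes ws :: "real vec list"
  assumes ws: "set ws \<subseteq> carrier_vec n" "corthogonal ws" "length ws = n"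
  shows "orthonormal_mat n (mat_of_cols n (map (\<lambda>w. (1 / sqrt (w \<bullet> w)) \<cdot>\<^sub>v w) ws))"
    (is "orthonormal_mat n (mat_of_cols n ?us)")
proof -
  have carrier: "ws ! i \<in> carrier_vec n" if "i < n" for i
    using that ws by auto
  have orthogonal: "ws ! i \<bullet> ws ! j = 0 \<longleftrightarrow> i \<noteq> j" if "i < n" "j < n" for i j
    using corthogonalD[OF ws(2)] that ws(3) by simp
  have positive: "0 < ws ! i \<bullet> ws ! i" if "i < n" for i
    using orthogonal[OF that that] scalar_prod_self_nonneg[of "ws ! i"] by linarith
  have col: "col (mat_of_cols n ?us) i = ?us ! i" if "i < n" for i
    using that ws carrier[OF that] by simp
  have orthonormal: "?us ! i \<bullet> ?us ! j = (if i = j then 1 else 0)" if "i < n" "j < n" for i j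
  proof -
    have "?us ! i \<bullet> ?us ! j
        = 1 / sqrt (ws ! i \<bullet> ws ! i) * (1 / sqrt (ws ! j \<bullet> ws ! j)) * (ws ! i \<bullet> ws ! j)"
      using that ws carrier[OF that(1)] carrier[OF that(2)]
      by (simp add: smult_scalar_prod_distrib scalar_prod_smult_distrib)
    then show ?thesis
      using orthogonal[OF that] positive[OF that(1)]
      by (auto simp: field_simps real_sqrt_mult[symmetric])
  qed
  show ?thesis
    unfolding orthonormal_mat_def
  proof (intro conjI eq_matI)
    fix i j assume "i < dim_row (1\<^sub>m n)" "j < dim_col (1\<^sub>m n)"
    then have i: "i < n" and j: "j < n" by auto
    have "(transpose_mat (mat_of_cols n ?us) * mat_of_cols n ?us) $$ (i, j)
        = col (mat_of_cols n ?us) i \<bullet> col (mat_of_cols n ?us) j"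
      using i j ws(3) by simp
    also have "\<dots> = 1\<^sub>m n $$ (i, j)"
      unfolding col[OF i] col[OF j] orthonormal[OF i j] using i j by simp
    finally show "(transpose_mat (mat_of_cols n ?us) * mat_of_cols n ?us) $$ (i, j) = 1\<^sub>m n $$ (i, j)" .
  qed (use mat_of_cols_carrier(1)[of n ?us] ws(3) in auto)
qed

lemma orthonormal_mat_first_column:
  fixes v :: "real vec"
  assumes v: "v \<in> carrier_vec n" and v0: "v \<noteq> 0\<^sub>v n"
  shows "\<exists>W c. orthonormal_mat n W \<and> col W 0 = c \<cdot>\<^sub>v v"
proof -
  interpret cof_vec_space n "TYPE(real)" .
  define b where "b = basis_completion v"
  have b: "set b \<subseteq> carrier_vec n" "distinct b" "\<not> lin_dep (set b)" "length b = n" "hd b = v"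
    using basis_completion[OF v v0] unfolding b_def by auto
  obtain vs where b_Cons: "b = v # vs"
    unfolding b_def basis_completion_def by (simp add: Let_def)
  define ws where "ws = gram_schmidt n b"
  have ws: "set ws \<subseteq> carrier_vec n" "corthogonal ws" "length ws = n"
    using gram_schmidt_result[OF b(1-3) ws_def] b(4) by auto
  have "ws ! 0 = v"
    using gram_schmidt_hd[OF v, of vs] ws(3) b(4) hd_conv_nth[of ws]
    unfolding ws_def b_Cons by fastforce
  moreover have "0 < n"
    using b(4) b_Cons by auto
  ultimately show ?thesis
    using orthonormal_mat_of_cols_normalized[OF ws] ws v
    by (intro exI[of _ "mat_of_cols n (map (\<lambda>w. (1 / sqrt (w \<bullet> w)) \<cdot>\<^sub>v w) ws)"]) auto
qed

lemma orthonormal_conj_first_column: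
  fixes W A :: "'a::field mat"
  assumes W: "orthonormal_mat n W" and A: "A \<in> carrier_mat n n" and "0 < n"
    and eigen: "A *\<^sub>v col W 0 = e \<cdot>\<^sub>v col W 0"
  shows "col (transpose_mat W * A * W) 0 = e \<cdot>\<^sub>v unit_vec n 0"
proof -
  have W_carrier: "W \<in> carrier_mat n n" and WtW: "transpose_mat W * W = 1\<^sub>m n"
    using W unfolding orthonormal_mat_def by auto
  have "col (transpose_mat W * A * W) 0 = (transpose_mat W * A) *\<^sub>v col W 0"
    using W_carrier A \<open>0 < n\<close> by (intro col_mult2[of _ n n]) auto
  also have "\<dots> = transpose_mat W *\<^sub>v (A *\<^sub>v col W 0)"
    using W_carrier A by (intro assoc_mult_mat_vec[of _ n n]) auto
  also have "\<dots> = e \<cdot>\<^sub>v (transpose_mat W *\<^sub>v col W 0)"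
    unfolding eigen using W_carrier \<open>0 < n\<close> by (intro mult_mat_vec[of _ n n]) auto
  also have "transpose_mat W *\<^sub>v col W 0 = col (transpose_mat W * W) 0"
    using W_carrier \<open>0 < n\<close> by (intro col_mult2[symmetric, of _ n n]) auto
  finally show ?thesis
    unfolding WtW using \<open>0 < n\<close> by simp
qed

lemma orthonormal_conj_cancel:
  fixes W A :: "'a::field mat"
  assumes W: "orthonormal_mat n W" and A: "A \<in> carrier_mat n n"
  shows "W * (transpose_mat W * A * W) * transpose_mat W = A"
proof -
  have W_carrier: "W \<in> carrier_mat n n" and right_inverse: "W * transpose_mat W = 1\<^sub>m n"
    using W orthonormal_mat_right_inverse[OF W] unfolding orthonormal_mat_def by auto
  have "W * (transpose_mat W * A * W) * transpose_mat W
      = (W * transpose_mat W) * A * (W * transpose_mat W)"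
    using W_carrier A by (simp add: assoc_mult_mat[of _ n n _ n _ n])
  also have "\<dots> = A"
    unfolding right_inverse using A by simp
  finally show ?thesis .
qed

lemma real_symmetric_deflation:
  fixes A :: "real mat"
  assumes A: "A \<in> carrier_mat (Suc m) (Suc m)" and symmetric: "transpose_mat A = A"
    and "eigenvalue A e"
  shows "\<exists>W A'. orthonormal_mat (Suc m) W \<and> A' \<in> carrier_mat m m \<and> transpose_mat A' = A' \<and>
    A = W * four_block_mat (mat 1 1 (\<lambda>_. e)) (0\<^sub>m 1 m) (0\<^sub>m m 1) A' * transpose_mat W"
proof -
  obtain v where v: "v \<in> carrier_vec (Suc m)" "v \<noteq> 0\<^sub>v (Suc m)" "A *\<^sub>v v = e \<cdot>\<^sub>v v"
    using \<open>eigenvalue A e\<close> A unfolding eigenvalue_def eigenvector_def by auto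
  obtain W c where W: "orthonormal_mat (Suc m) W" and col: "col W 0 = c \<cdot>\<^sub>v v"
    using orthonormal_mat_first_column[OF v(1,2)] by blast
  have W_carrier: "W \<in> carrier_mat (Suc m) (Suc m)"
    using W unfolding orthonormal_mat_def by simp
  have eigen: "A *\<^sub>v col W 0 = e \<cdot>\<^sub>v col W 0"
    unfolding col using A v by (simp add: mult_mat_vec smult_smult_assoc mult.commute)
  define T where "T = transpose_mat W * A * W"
  have first_col: "col T 0 = e \<cdot>\<^sub>v unit_vec (Suc m) 0"
    unfolding T_def using orthonormal_conj_first_column[OF W A _ eigen] by simp
  have T: "T \<in> carrier_mat (Suc m) (Suc m)"
    unfolding T_def using W_carrier A by simp
  have T_symmetric: "T $$ (i, j) = T $$ (j, i)" if "i < Suc m" "j < Suc m" for i j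
  proof -
    have "transpose_mat T = T"
      unfolding T_def using W_carrier A symmetric
      by (simp add: transpose_mult[of _ "Suc m" "Suc m" _ "Suc m"] assoc_mult_mat[of _ "Suc m" "Suc m" _ "Suc m" _ "Suc m"])
    then show ?thesis
      using that T by (metis carrier_matD index_transpose_mat(1))
  qed
  have T_col: "T $$ (i, 0) = (if i = 0 then e else 0)" if "i < Suc m" for i
    using arg_cong[OF first_col, of "\<lambda>x. x $ i"] that T by simp
  have T_row: "T $$ (0, j) = (if j = 0 then e else 0)" if "j < Suc m" for j
    using T_symmetric[OF _ that] T_col[OF that] by simp
  define A' where "A' = mat m m (\<lambda>(i, j). T $$ (Suc i, Suc j))"
  have "T = four_block_mat (mat 1 1 (\<lambda>_. e)) (0\<^sub>m 1 m) (0\<^sub>m m 1) A'"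
    by (rule eq_matI)
      (use T T_col T_row in \<open>auto simp: A'_def\<close>)
  moreover have "transpose_mat A' = A'"
    using T_symmetric by (auto simp: A'_def intro!: eq_matI)
  moreover have "A = W * T * transpose_mat W"
    unfolding T_def using orthonormal_conj_cancel[OF W A] by simp
  ultimately show ?thesis
    using W by (intro exI[of _ W] exI[of _ A']) (simp add: A'_def)
qed

lemma orthonormal_conj_similar:
  fixes W F :: "'a::field mat"
  assumes "orthonormal_mat n W" and "F \<in> carrier_mat n n"
  shows "similar_mat (W * F * transpose_mat W) F"
  unfolding similar_mat_def
  using assms orthonormal_mat_right_inverse[OF assms(1)]
  by (intro exI[of _ W] exI[of _ "transpose_mat W"] similar_mat_witI[of W "transpose_mat W" n])
    (auto simp: orthonormal_mat_def)

lemma mat_diag_Suc_four_block: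
  "mat_diag (Suc m) f = four_block_mat (mat 1 1 (\<lambda>_. f 0)) (0\<^sub>m 1 m) (0\<^sub>m m 1) (mat_diag m (\<lambda>i. f (Suc i)))"
  by (rule eq_matI) (auto simp: mat_diag_def)

lemma transpose_four_block_one:
  assumes "Q \<in> carrier_mat m m"
  shows "transpose_mat (four_block_mat (1\<^sub>m 1) (0\<^sub>m 1 m) (0\<^sub>m m 1) Q)
    = four_block_mat (1\<^sub>m 1) (0\<^sub>m 1 m) (0\<^sub>m m 1) (transpose_mat Q)"
  using assms by (subst transpose_four_block_mat) auto

lemma four_block_one_conj:
  fixes Q D c :: "'a::comm_ring_1 mat"
  assumes Q: "Q \<in> carrier_mat m m" and "D \<in> carrier_mat m m" "c \<in> carrier_mat 1 1"
  shows "four_block_mat (1\<^sub>m 1) (0\<^sub>m 1 m) (0\<^sub>m m 1) Q * four_block_mat c (0\<^sub>m 1 m) (0\<^sub>m m 1) D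
      * transpose_mat (four_block_mat (1\<^sub>m 1) (0\<^sub>m 1 m) (0\<^sub>m m 1) Q)
    = four_block_mat c (0\<^sub>m 1 m) (0\<^sub>m m 1) (Q * D * transpose_mat Q)"
  unfolding transpose_four_block_one[OF Q] using assms
  by (subst mult_four_block_mat, auto)+

lemma orthonormal_mat_four_block:
  assumes "orthonormal_mat m Q"
  shows "orthonormal_mat (Suc m) (four_block_mat (1\<^sub>m 1) (0\<^sub>m 1 m) (0\<^sub>m m 1) Q)"
proof -
  have Q: "Q \<in> carrier_mat m m" "transpose_mat Q * Q = 1\<^sub>m m"
    using assms unfolding orthonormal_mat_def by auto
  have "four_block_mat (1\<^sub>m 1) (0\<^sub>m 1 m) (0\<^sub>m m 1) (transpose_mat Q) * four_block_mat (1\<^sub>m 1) (0\<^sub>m 1 m) (0\<^sub>m m 1) Q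
      = four_block_mat (1\<^sub>m 1) (0\<^sub>m 1 m) (0\<^sub>m m 1) (1\<^sub>m m)"
    using Q by (subst mult_four_block_mat) auto
  then show ?thesis
    unfolding orthonormal_mat_def transpose_four_block_one[OF Q(1)] using Q(1)
    by (auto intro: carrier_matI)
qed

lemma char_poly_orthonormal_deflation:
  fixes W A' :: "'a::field mat"
  assumes W: "orthonormal_mat (Suc m) W" and A': "A' \<in> carrier_mat m m"
  shows "char_poly (W * four_block_mat (mat 1 1 (\<lambda>_. e)) (0\<^sub>m 1 m) (0\<^sub>m m 1) A' * transpose_mat W)
    = [:- e, 1:] * char_poly A'"
proof -
  have "char_poly (W * four_block_mat (mat 1 1 (\<lambda>_. e)) (0\<^sub>m 1 m) (0\<^sub>m m 1) A' * transpose_mat W)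
      = char_poly (four_block_mat (mat 1 1 (\<lambda>_. e)) (0\<^sub>m 1 m) (0\<^sub>m m 1) A')"
    using A' by (intro char_poly_similar orthonormal_conj_similar[OF W]) auto
  also have "\<dots> = char_poly (mat 1 1 (\<lambda>_. e)) * char_poly A'"
    using A' by (intro char_poly_four_block_zeros_col) auto
  also have "char_poly (mat 1 1 (\<lambda>_. e)) = [:- e, 1:]"
    by (simp add: char_poly_defs det_def sign_def)
  finally show ?thesis .
qed

lemma real_symmetric_diagonalization:
  fixes A :: "real mat"
  assumes "A \<in> carrier_mat n n" and "transpose_mat A = A"
    and "char_poly A = (\<Prod>x\<leftarrow>es. [:- x, 1:])"
  shows "\<exists>Q. orthonormal_mat n Q \<and> A = Q * mat_diag n (\<lambda>i. es ! i) * transpose_mat Q"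
  using assms
proof (induction es arbitrary: n A)
  case Nil
  then have "n = 0"
    using degree_monic_char_poly[of A n] by simp
  with Nil.prems(1) show ?case
    by (intro exI[of _ "1\<^sub>m 0"]) (auto simp: orthonormal_mat_def intro!: eq_matI)
next
  case (Cons e es)
  have char_poly: "char_poly A = [:- e, 1:] * (\<Prod>x\<leftarrow>es. [:- x, 1:])"
    using Cons.prems(3) by simp
  have "degree (char_poly A) = Suc (length es)"
    unfolding Cons.prems(3) by (simp only: degree_linear_factors length_Cons)
  then obtain m where n: "n = Suc m"
    using degree_monic_char_poly[OF Cons.prems(1)] by auto
  have "eigenvalue A e"
    using eigenvalue_root_char_poly[OF Cons.prems(1)] char_poly by simp
  then obtain W A' where W: "orthonormal_mat (Suc m) W" and A': "A' \<in> carrier_mat m m"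
    and A'_symmetric: "transpose_mat A' = A'"
    and A_eq: "A = W * four_block_mat (mat 1 1 (\<lambda>_. e)) (0\<^sub>m 1 m) (0\<^sub>m m 1) A' * transpose_mat W"
    using real_symmetric_deflation[of A m e] Cons.prems(1,2) n by auto
  have "[:- e, 1:] * char_poly A' = [:- e, 1:] * (\<Prod>x\<leftarrow>es. [:- x, 1:])"
    unfolding char_poly[symmetric] A_eq by (rule char_poly_orthonormal_deflation[OF W A', symmetric])
  then have "char_poly A' = (\<Prod>x\<leftarrow>es. [:- x, 1:])"
    by (metis mult_cancel_left pCons_eq_0_iff zero_neq_one)
  then obtain Q where Q: "orthonormal_mat m Q" and A'_eq: "A' = Q * mat_diag m (\<lambda>i. es ! i) * transpose_mat Q"
    using Cons.IH[OF A' A'_symmetric] by blast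
  define P where "P = four_block_mat (1\<^sub>m 1) (0\<^sub>m 1 m) (0\<^sub>m m 1) Q"
  have P: "orthonormal_mat (Suc m) P"
    unfolding P_def by (rule orthonormal_mat_four_block[OF Q])
  have block_eq: "four_block_mat (mat 1 1 (\<lambda>_. e)) (0\<^sub>m 1 m) (0\<^sub>m m 1) A'
      = P * mat_diag (Suc m) (\<lambda>i. (e # es) ! i) * transpose_mat P"
    using Q unfolding P_def A'_eq mat_diag_Suc_four_block orthonormal_mat_def
    by (subst four_block_one_conj) auto
  have "A = W * P * mat_diag (Suc m) (\<lambda>i. (e # es) ! i) * transpose_mat (W * P)"
    unfolding A_eq block_eq using W P
    by (intro conj_transpose_mult) (auto simp: orthonormal_mat_def)
  then show ?case
    using orthonormal_mat_mult[OF W P] n by blast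
qed

lemma real_symmetric_sorted_eigenvalues:
  fixes A :: "real mat"
  assumes A: "A \<in> carrier_mat n n" and symmetric: "transpose_mat A = A"
  shows "sorted (sorted_eigenvalues A)" and "length (sorted_eigenvalues A) = n"
    and "\<exists>Q. orthonormal_mat n Q \<and> A = Q * mat_diag n (\<lambda>i. sorted_eigenvalues A ! i) * transpose_mat Q"
proof -
  obtain es where es: "char_poly A = (\<Prod>x\<leftarrow>es. [:- x, 1:])"
    using real_symmetric_char_poly_splits[OF A symmetric] by blast
  have sorted_es: "sorted_eigenvalues A = sort es"
    by (rule sorted_eigenvalues_sort[OF es])
  have char_poly: "char_poly A = (\<Prod>x\<leftarrow>sorted_eigenvalues A. [:- x, 1:])"
    unfolding sorted_es es by (simp add: prod_mset_prod_list[symmetric])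
  show "sorted (sorted_eigenvalues A)"
    unfolding sorted_es by simp
  show "length (sorted_eigenvalues A) = n"
    using degree_monic_char_poly[OF A] unfolding char_poly degree_linear_factors by simp
  show "\<exists>Q. orthonormal_mat n Q \<and> A = Q * mat_diag n (\<lambda>i. sorted_eigenvalues A ! i) * transpose_mat Q"
    by (rule real_symmetric_diagonalization[OF A symmetric char_poly])
qed

section \<open>The Courant--Fischer characterization\<close>

lemma orthonormal_mult_vec_cancel:
  fixes Q :: "'a::field mat"
  assumes "orthonormal_mat n Q" and "y \<in> carrier_vec n"
  shows "transpose_mat Q *\<^sub>v (Q *\<^sub>v y) = y"
  using assms unfolding orthonormal_mat_def
  by (simp add: assoc_mult_mat_vec[of "transpose_mat Q" n n Q n y, symmetric])

lemma quadratic_form_orthonormal_diag: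
  fixes Q A :: "real mat"
  assumes Q: "orthonormal_mat n Q" and A: "A = Q * mat_diag n f * transpose_mat Q"
    and y: "y \<in> carrier_vec n"
  shows "(Q *\<^sub>v y) \<bullet> (A *\<^sub>v (Q *\<^sub>v y)) = (\<Sum>i<n. f i * (y $ i)\<^sup>2)"
    and "(Q *\<^sub>v y) \<bullet> (Q *\<^sub>v y) = (\<Sum>i<n. (y $ i)\<^sup>2)"
proof -
  have Q_carrier: "Q \<in> carrier_mat n n"
    using Q unfolding orthonormal_mat_def by simp
  have adjoint: "(Q *\<^sub>v x) \<bullet> z = x \<bullet> (transpose_mat Q *\<^sub>v z)" if "x \<in> carrier_vec n" "z \<in> carrier_vec n" for x z
    using transpose_vec_mult_scalar[of "transpose_mat Q" n n z x] Q_carrier that by simp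
  have diag_y: "mat_diag n f *\<^sub>v y \<in> carrier_vec n"
    unfolding mat_diag_mult_vec[OF y] by simp
  have "A *\<^sub>v (Q *\<^sub>v y) = Q *\<^sub>v (mat_diag n f *\<^sub>v (transpose_mat Q *\<^sub>v (Q *\<^sub>v y)))"
    unfolding A using Q_carrier y
    by (simp add: assoc_mult_mat_vec[of _ n n _ n])
  also have "\<dots> = Q *\<^sub>v (mat_diag n f *\<^sub>v y)"
    unfolding orthonormal_mult_vec_cancel[OF Q y] ..
  finally have "(Q *\<^sub>v y) \<bullet> (A *\<^sub>v (Q *\<^sub>v y))
      = y \<bullet> (transpose_mat Q *\<^sub>v (Q *\<^sub>v (mat_diag n f *\<^sub>v y)))"
    using adjoint[OF y, of "Q *\<^sub>v (mat_diag n f *\<^sub>v y)"] Q_carrier diag_y by simp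
  also have "\<dots> = y \<bullet> (mat_diag n f *\<^sub>v y)"
    unfolding orthonormal_mult_vec_cancel[OF Q diag_y] ..
  finally have "(Q *\<^sub>v y) \<bullet> (A *\<^sub>v (Q *\<^sub>v y)) = y \<bullet> (mat_diag n f *\<^sub>v y)" .
  then show "(Q *\<^sub>v y) \<bullet> (A *\<^sub>v (Q *\<^sub>v y)) = (\<Sum>i<n. f i * (y $ i)\<^sup>2)"
    using y by (simp add: mat_diag_mult_vec scalar_prod_def atLeast0LessThan power2_eq_square ac_simps)
  show "(Q *\<^sub>v y) \<bullet> (Q *\<^sub>v y) = (\<Sum>i<n. (y $ i)\<^sup>2)"
    using adjoint[of y "Q *\<^sub>v y"] orthonormal_mult_vec_cancel[OF Q y] Q_carrier y
    by (simp add: scalar_prod_self_sum)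
qed

text \<open>The range of \<open>U\<close> plays the role of the subspace; the strict inequality forces
  \<open>U\<close> to have independent columns.\<close>

definition rayleigh_below :: "real mat \<Rightarrow> real \<Rightarrow> real mat \<Rightarrow> bool" where
  "rayleigh_below A t U \<longleftrightarrow> (\<forall>c \<in> carrier_vec (dim_col U). c \<noteq> 0\<^sub>v (dim_col U) \<longrightarrow>
      (U *\<^sub>v c) \<bullet> (A *\<^sub>v (U *\<^sub>v c)) < t * ((U *\<^sub>v c) \<bullet> (U *\<^sub>v c)))"

lemma first_columns_mult_vec:
  assumes Q: "Q \<in> carrier_mat n n" and "m \<le> n" and c: "c \<in> carrier_vec m"
  shows "mat n m (\<lambda>(r, j). Q $$ (r, j)) *\<^sub>v c = Q *\<^sub>v vec n (\<lambda>i. if i < m then c $ i else 0)"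
proof (rule eq_vecI)
  fix r assume "r < dim_vec (Q *\<^sub>v vec n (\<lambda>i. if i < m then c $ i else 0))"
  then have r: "r < n" using Q by simp
  have "(Q *\<^sub>v vec n (\<lambda>i. if i < m then c $ i else 0)) $ r
      = (\<Sum>i = 0..<n. Q $$ (r, i) * (if i < m then c $ i else 0))"
    using r Q by (simp add: scalar_prod_def)
  also have "\<dots> = (\<Sum>i = 0..<m. Q $$ (r, i) * c $ i)"
    by (rule sum.mono_neutral_cong_right) (use \<open>m \<le> n\<close> in auto)
  finally show "(mat n m (\<lambda>(r, j). Q $$ (r, j)) *\<^sub>v c) $ r
      = (Q *\<^sub>v vec n (\<lambda>i. if i < m then c $ i else 0)) $ r"
    using r c by (simp add: scalar_prod_def)
qed (use Q in auto)

lemma rayleigh_below_exists: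
  fixes Q A :: "real mat"
  assumes Q: "orthonormal_mat n Q" and A: "A = Q * mat_diag n (\<lambda>i. ls ! i) * transpose_mat Q"
    and sorted: "sorted ls" and length: "length ls = n" and k: "k < n" and less: "ls ! k < t"
  shows "\<exists>U \<in> carrier_mat n (Suc k). rayleigh_below A t U"
proof
  define U where "U = mat n (Suc k) (\<lambda>(r, j). Q $$ (r, j))"
  show U_carrier: "U \<in> carrier_mat n (Suc k)"
    unfolding U_def by simp
  have Q_carrier: "Q \<in> carrier_mat n n"
    using Q unfolding orthonormal_mat_def by simp
  show "rayleigh_below A t U"
    unfolding rayleigh_below_def
  proof (intro ballI impI)
    fix c :: "real vec"
    assume c: "c \<in> carrier_vec (dim_col U)" and c0: "c \<noteq> 0\<^sub>v (dim_col U)"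
    define y where "y = vec n (\<lambda>i. if i < Suc k then c $ i else 0)"
    have y: "y \<in> carrier_vec n"
      unfolding y_def by simp
    have "U *\<^sub>v c = Q *\<^sub>v y"
      unfolding U_def y_def using Q_carrier k c U_carrier by (intro first_columns_mult_vec) auto
    moreover obtain j where j: "j \<le> k" "c $ j \<noteq> 0"
      using c c0 U_carrier by (metis carrier_matD(2) carrier_vecD eq_vecI index_zero_vec less_Suc_eq_le)
    have "(\<Sum>i<n. ls ! i * (y $ i)\<^sup>2) < t * (\<Sum>i<n. (y $ i)\<^sup>2)"
    proof -
      have "0 < (\<Sum>i<n. (t - ls ! i) * (y $ i)\<^sup>2)"
      proof (rule sum_pos2[of _ j])
        show "0 < (t - ls ! j) * (y $ j)\<^sup>2"
          using sorted_nth_mono[OF sorted j(1)] j k length less by (simp add: y_def)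
        show "0 \<le> (t - ls ! i) * (y $ i)\<^sup>2" if "i \<in> {..<n}" for i
          using sorted_nth_mono[OF sorted, of i k] that k length less
          by (auto simp: y_def intro!: mult_nonneg_nonneg)
      qed (use j k in auto)
      then show ?thesis
        by (simp add: sum_distrib_left sum_subtractf algebra_simps)
    qed
    ultimately show "(U *\<^sub>v c) \<bullet> (A *\<^sub>v (U *\<^sub>v c)) < t * ((U *\<^sub>v c) \<bullet> (U *\<^sub>v c))"
      using quadratic_form_orthonormal_diag[OF Q A y] by simp
  qed
qed

lemma exists_kernel_vector_first_rows:
  fixes G :: "'a::idom mat"
  assumes G: "G \<in> carrier_mat n (Suc k)" and k: "k < n"
  shows "\<exists>c \<in> carrier_vec (Suc k). c \<noteq> 0\<^sub>v (Suc k) \<and> (\<forall>i<k. (G *\<^sub>v c) $ i = 0)"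
proof -
  \<comment> \<open>the leading square block with its last row zeroed is singular\<close>
  define E where "E = multrow k 0 (mat (Suc k) (Suc k) (\<lambda>(i, j). G $$ (i, j)))"
  have E: "E \<in> carrier_mat (Suc k) (Suc k)"
    unfolding E_def by simp
  have "det E = 0"
    unfolding E_def by (subst det_multrow) auto
  then obtain c where c: "c \<in> carrier_vec (Suc k)" "c \<noteq> 0\<^sub>v (Suc k)" and Ec: "E *\<^sub>v c = 0\<^sub>v (Suc k)"
    using det_0_iff_vec_prod_zero[OF E] by blast
  have "(G *\<^sub>v c) $ i = (E *\<^sub>v c) $ i" if "i < k" for i
    using that k G c by (simp add: E_def mat_multrow_gen_def scalar_prod_def)
  then have "\<forall>i<k. (G *\<^sub>v c) $ i = 0"
    using Ec by simp
  with c show ?thesis by blast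
qed

lemma rayleigh_below_imp_less:
  fixes Q A U :: "real mat"
  assumes Q: "orthonormal_mat n Q" and A: "A = Q * mat_diag n (\<lambda>i. ls ! i) * transpose_mat Q"
    and sorted: "sorted ls" and length: "length ls = n" and k: "k < n"
    and U: "U \<in> carrier_mat n (Suc k)" and below: "rayleigh_below A t U"
  shows "ls ! k < t"
proof (rule ccontr)
  assume "\<not> ls ! k < t"
  have Q_carrier: "Q \<in> carrier_mat n n"
    using Q unfolding orthonormal_mat_def by simp
  obtain c where c: "c \<in> carrier_vec (Suc k)" "c \<noteq> 0\<^sub>v (Suc k)"
    and first_zero: "\<forall>i<k. (transpose_mat Q * U *\<^sub>v c) $ i = 0"
    using exists_kernel_vector_first_rows[of "transpose_mat Q * U" n k] Q_carrier U k by auto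
  define y where "y = transpose_mat Q *\<^sub>v (U *\<^sub>v c)"
  have y: "y \<in> carrier_vec n"
    unfolding y_def using Q_carrier U c by simp
  have y_zero: "y $ i = 0" if "i < k" for i
    using first_zero that Q_carrier U c unfolding y_def by (simp add: assoc_mult_mat_vec[of _ n n])
  have "U *\<^sub>v c = (Q * transpose_mat Q) *\<^sub>v (U *\<^sub>v c)"
    unfolding orthonormal_mat_right_inverse[OF Q] using U c by simp
  also have "\<dots> = Q *\<^sub>v y"
    unfolding y_def using Q_carrier U c by (simp add: assoc_mult_mat_vec[of _ n n])
  finally have Uc: "U *\<^sub>v c = Q *\<^sub>v y" .
  have "t * (\<Sum>i<n. (y $ i)\<^sup>2) \<le> (\<Sum>i<n. ls ! i * (y $ i)\<^sup>2)"
    unfolding sum_distrib_left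
  proof (rule sum_mono)
    fix i assume "i \<in> {..<n}"
    then show "t * (y $ i)\<^sup>2 \<le> ls ! i * (y $ i)\<^sup>2"
      using y_zero[of i] sorted_nth_mono[OF sorted, of k i] \<open>\<not> ls ! k < t\<close> length
      by (cases "i < k") (auto intro!: mult_right_mono)
  qed
  moreover have "(U *\<^sub>v c) \<bullet> (A *\<^sub>v (U *\<^sub>v c)) < t * ((U *\<^sub>v c) \<bullet> (U *\<^sub>v c))"
    using below c U unfolding rayleigh_below_def by auto
  ultimately show False
    unfolding Uc quadratic_form_orthonormal_diag[OF Q A y] by simp
qed

lemma sorted_eigenvalue_less_iff:
  fixes A :: "real mat"
  assumes A: "A \<in> carrier_mat n n" and symmetric: "transpose_mat A = A" and k: "k < n"
  shows "sorted_eigenvalues A ! k < t \<longleftrightarrow> (\<exists>U \<in> carrier_mat n (Suc k). rayleigh_below A t U)"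
proof -
  obtain Q where Q: "orthonormal_mat n Q"
    and A_eq: "A = Q * mat_diag n (\<lambda>i. sorted_eigenvalues A ! i) * transpose_mat Q"
    using real_symmetric_sorted_eigenvalues(3)[OF A symmetric] by blast
  note eigenvalues = real_symmetric_sorted_eigenvalues(1,2)[OF A symmetric]
  show ?thesis
    using rayleigh_below_exists[OF Q A_eq eigenvalues k] rayleigh_below_imp_less[OF Q A_eq eigenvalues k]
    by blast
qed

section \<open>Ostrowski's theorem for diagonal congruences\<close>

lemma mult_le_max_mult:
  fixes a b p q t :: real
  assumes lower: "a * p \<le> q" and upper: "q \<le> b * p" and "0 \<le> p"
  shows "t * q \<le> max (a * t) (b * t) * p"
proof (cases "0 \<le> t")
  case True
  then have "t * q \<le> (b * t) * p"
    using mult_left_mono[OF upper True] by (simp add: ac_simps)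
  then show ?thesis
    using mult_right_mono[OF max.cobounded2[of "b * t" "a * t"] \<open>0 \<le> p\<close>] by linarith
next
  case False
  then have "t * q \<le> (a * t) * p"
    using mult_left_mono_neg[OF lower, of t] by (simp add: ac_simps)
  then show ?thesis
    using mult_right_mono[OF max.cobounded1[of "a * t" "b * t"] \<open>0 \<le> p\<close>] by linarith
qed

lemma scalar_prod_mat_diag_bounds:
  fixes x :: "real vec"
  assumes x: "x \<in> carrier_vec n" and bounds: "\<And>i. i < n \<Longrightarrow> a \<le> (d i)\<^sup>2 \<and> (d i)\<^sup>2 \<le> b"
  shows "a * (x \<bullet> x) \<le> (mat_diag n d *\<^sub>v x) \<bullet> (mat_diag n d *\<^sub>v x)"
    and "(mat_diag n d *\<^sub>v x) \<bullet> (mat_diag n d *\<^sub>v x) \<le> b * (x \<bullet> x)"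
proof -
  have "(mat_diag n d *\<^sub>v x) \<bullet> (mat_diag n d *\<^sub>v x) = (\<Sum>i<n. (d i)\<^sup>2 * (x $ i)\<^sup>2)"
    unfolding mat_diag_mult_vec[OF x] by (subst scalar_prod_self_sum[of _ n]) (simp_all add: power_mult_distrib)
  then show "a * (x \<bullet> x) \<le> (mat_diag n d *\<^sub>v x) \<bullet> (mat_diag n d *\<^sub>v x)"
    and "(mat_diag n d *\<^sub>v x) \<bullet> (mat_diag n d *\<^sub>v x) \<le> b * (x \<bullet> x)"
    unfolding scalar_prod_self_sum[OF x] sum_distrib_left
    using bounds by (auto intro!: sum_mono mult_right_mono)
qed

lemma quadratic_form_mat_diag_conj:
  fixes A :: "'a::comm_semiring_0 mat"
  assumes A: "A \<in> carrier_mat n n" and x: "x \<in> carrier_vec n"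
  shows "x \<bullet> ((mat_diag n d * A * mat_diag n d) *\<^sub>v x)
    = (mat_diag n d *\<^sub>v x) \<bullet> (A *\<^sub>v (mat_diag n d *\<^sub>v x))"
proof -
  have z: "mat_diag n d *\<^sub>v x \<in> carrier_vec n"
    using x by (simp add: mat_diag_mult_vec)
  have "(mat_diag n d * A * mat_diag n d) *\<^sub>v x = (mat_diag n d * A) *\<^sub>v (mat_diag n d *\<^sub>v x)"
    using A x by (intro assoc_mult_mat_vec) auto
  also have "\<dots> = mat_diag n d *\<^sub>v (A *\<^sub>v (mat_diag n d *\<^sub>v x))"
    using A z by (intro assoc_mult_mat_vec[of _ n n]) auto
  finally show ?thesis
    using scalar_prod_mat_diag_mult_vec[OF x, of "A *\<^sub>v (mat_diag n d *\<^sub>v x)" d] A z by simp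
qed

lemma rayleigh_below_diag_congruence:
  fixes A U :: "real mat"
  assumes A: "A \<in> carrier_mat n n" and U: "U \<in> carrier_mat n m"
    and bounds: "\<And>i. i < n \<Longrightarrow> a \<le> (d i)\<^sup>2 \<and> (d i)\<^sup>2 \<le> b"
    and below: "rayleigh_below A t (mat_diag n d * U)"
  shows "rayleigh_below (mat_diag n d * A * mat_diag n d) (max (a * t) (b * t)) U"
  unfolding rayleigh_below_def
proof (intro ballI impI)
  fix c :: "real vec" assume c: "c \<in> carrier_vec (dim_col U)" and c0: "c \<noteq> 0\<^sub>v (dim_col U)"
  define x where "x = U *\<^sub>v c"
  define z where "z = mat_diag n d *\<^sub>v x"
  have c_carrier: "c \<in> carrier_vec m"
    using c U by simp
  have x: "x \<in> carrier_vec n"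
    unfolding x_def using U c_carrier by simp
  have Dc: "(mat_diag n d * U) *\<^sub>v c = z"
    unfolding z_def x_def by (rule assoc_mult_mat_vec[OF mat_diag_dim U c_carrier])
  have "\<forall>c \<in> carrier_vec (dim_col U). c \<noteq> 0\<^sub>v (dim_col U) \<longrightarrow>
      ((mat_diag n d * U) *\<^sub>v c) \<bullet> (A *\<^sub>v ((mat_diag n d * U) *\<^sub>v c))
      < t * (((mat_diag n d * U) *\<^sub>v c) \<bullet> ((mat_diag n d * U) *\<^sub>v c))"
    using below unfolding rayleigh_below_def index_mult_mat(3) .
  from this[rule_format, OF c c0] have "z \<bullet> (A *\<^sub>v z) < t * (z \<bullet> z)"
    unfolding Dc .
  moreover have "x \<bullet> ((mat_diag n d * A * mat_diag n d) *\<^sub>v x) = z \<bullet> (A *\<^sub>v z)"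
    unfolding z_def by (rule quadratic_form_mat_diag_conj[OF A x])
  ultimately have "x \<bullet> ((mat_diag n d * A * mat_diag n d) *\<^sub>v x) < t * (z \<bullet> z)"
    by simp
  also have "\<dots> \<le> max (a * t) (b * t) * (x \<bullet> x)"
    unfolding z_def using scalar_prod_mat_diag_bounds[OF x bounds] scalar_prod_self_nonneg[of x]
    by (rule mult_le_max_mult)
  finally show "(U *\<^sub>v c) \<bullet> ((mat_diag n d * A * mat_diag n d) *\<^sub>v (U *\<^sub>v c))
      < max (a * t) (b * t) * ((U *\<^sub>v c) \<bullet> (U *\<^sub>v c))"
    unfolding x_def .
qed

lemma isCont_le_of_less_above:
  fixes g :: "real \<Rightarrow> real"
  assumes "isCont g l" and "\<And>t. l < t \<Longrightarrow> u < g t"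
  shows "u \<le> g l"
proof (rule tendsto_lowerbound)
  show "(g \<longlongrightarrow> g l) (at_right l)"
    using assms(1) by (simp add: isCont_def filterlim_at_split)
  show "\<forall>\<^sub>F t in at_right l. u \<le> g t"
    using eventually_at_right_less[of l] by eventually_elim (use assms(2) in \<open>auto intro: less_imp_le\<close>)
qed simp

lemma sorted_eigenvalue_diag_congruence_le:
  fixes A :: "real mat"
  assumes A: "A \<in> carrier_mat n n" and symmetric: "transpose_mat A = A" and k: "k < n"
    and bounds: "\<And>i. i < n \<Longrightarrow> a \<le> (d i)\<^sup>2 \<and> (d i)\<^sup>2 \<le> b"
    and nonzero: "\<And>i. i < n \<Longrightarrow> d i \<noteq> 0"
  shows "sorted_eigenvalues (mat_diag n d * A * mat_diag n d) ! k
    \<le> max (a * sorted_eigenvalues A ! k) (b * sorted_eigenvalues A ! k)"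
proof (rule isCont_le_of_less_above[where g = "\<lambda>t. max (a * t) (b * t)"])
  show "isCont (\<lambda>t. max (a * t) (b * t)) (sorted_eigenvalues A ! k)"
    by (intro continuous_intros)
  have DAD: "mat_diag n d * A * mat_diag n d \<in> carrier_mat n n"
    "transpose_mat (mat_diag n d * A * mat_diag n d) = mat_diag n d * A * mat_diag n d"
    using A by (simp_all add: transpose_mat_diag_conj symmetric mult_carrier_mat[of _ n n _ n])
  fix t assume "sorted_eigenvalues A ! k < t"
  then obtain U where U: "U \<in> carrier_mat n (Suc k)" and below: "rayleigh_below A t U"
    using sorted_eigenvalue_less_iff[OF A symmetric k] by blast
  define V where "V = mat_diag n (\<lambda>i. 1 / d i) * U"
  have V: "V \<in> carrier_mat n (Suc k)"
    unfolding V_def by (rule mult_carrier_mat[OF mat_diag_dim U])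
  have "mat_diag n d * V = U"
    unfolding V_def using nonzero U by (intro mat_diag_cancel_left) auto
  then have "rayleigh_below (mat_diag n d * A * mat_diag n d) (max (a * t) (b * t)) V"
    using rayleigh_below_diag_congruence[OF A V bounds] below by simp
  then show "sorted_eigenvalues (mat_diag n d * A * mat_diag n d) ! k < max (a * t) (b * t)"
    using sorted_eigenvalue_less_iff[OF DAD k] V by blast
qed

lemma exists_factor_between:
  fixes a b l u :: real
  assumes "0 < a" and "a \<le> b"
    and upper: "u \<le> max (a * l) (b * l)" and lower: "l \<le> max (1 / b * u) (1 / a * u)"
  shows "\<exists>\<theta>. a \<le> \<theta> \<and> \<theta> \<le> b \<and> u = \<theta> * l"
proof -
  have "0 < b" using assms by simp
  have "min (a * l) (b * l) \<le> u"
    using lower \<open>0 < a\<close> \<open>0 < b\<close> by (auto simp: max_def field_simps split: if_splits)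
  consider "0 < l" | "l = 0" | "l < 0" by linarith
  then show ?thesis
  proof cases
    case 1
    then show ?thesis
      using upper \<open>min (a * l) (b * l) \<le> u\<close> \<open>a \<le> b\<close> mult_right_mono[OF \<open>a \<le> b\<close>, of l]
      by (intro exI[of _ "u / l"]) (auto simp: field_simps max_def min_def split: if_splits)
  next
    case 2
    then show ?thesis
      using upper \<open>min (a * l) (b * l) \<le> u\<close> \<open>a \<le> b\<close> by (intro exI[of _ a]) auto
  next
    case 3
    then show ?thesis
      using upper \<open>min (a * l) (b * l) \<le> u\<close> \<open>a \<le> b\<close> mult_right_mono_neg[OF \<open>a \<le> b\<close>, of l]
      by (intro exI[of _ "u / l"]) (auto simp: field_simps max_def min_def split: if_splits)
  qed
qed

lemma ostrowski_diag_congruence: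
  fixes A :: "real mat"
  assumes A: "A \<in> carrier_mat n n" and symmetric: "transpose_mat A = A" and k: "k < n"
    and "0 < a" and bounds: "\<And>i. i < n \<Longrightarrow> a \<le> (r i)\<^sup>2 \<and> (r i)\<^sup>2 \<le> b"
  shows "\<exists>\<theta>. a \<le> \<theta> \<and> \<theta> \<le> b \<and>
    sorted_eigenvalues (mat_diag n r * A * mat_diag n r) ! k = \<theta> * sorted_eigenvalues A ! k"
proof -
  define C where "C = mat_diag n r * A * mat_diag n r"
  have nonzero: "r i \<noteq> 0" if "i < n" for i
    using bounds[OF that] \<open>0 < a\<close> by auto
  have C: "C \<in> carrier_mat n n" "transpose_mat C = C"
    unfolding C_def using A by (simp_all add: transpose_mat_diag_conj symmetric mult_carrier_mat[of _ n n _ n])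
  have "mat_diag n (\<lambda>i. 1 / r i) * C * mat_diag n (\<lambda>i. 1 / r i) = mat_diag n (\<lambda>_. 1) * A * mat_diag n (\<lambda>_. 1)"
    unfolding C_def mat_diag_conj_conj[OF A] using nonzero by (intro arg_cong2[where f = "(*)"] arg_cong[where f = "(*) _"] mat_diag_cong) auto
  then have "A = mat_diag n (\<lambda>i. 1 / r i) * C * mat_diag n (\<lambda>i. 1 / r i)"
    using A by simp
  moreover have "1 / b \<le> (1 / r i)\<^sup>2 \<and> (1 / r i)\<^sup>2 \<le> 1 / a" if "i < n" for i
    using bounds[OF that] \<open>0 < a\<close> by (auto simp: power_one_over intro!: frac_le)
  ultimately have "sorted_eigenvalues A ! k
      \<le> max (1 / b * sorted_eigenvalues C ! k) (1 / a * sorted_eigenvalues C ! k)"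
    using sorted_eigenvalue_diag_congruence_le[OF C k, of "1 / b" "\<lambda>i. 1 / r i" "1 / a"] nonzero by simp
  moreover have "sorted_eigenvalues C ! k
      \<le> max (a * sorted_eigenvalues A ! k) (b * sorted_eigenvalues A ! k)"
    unfolding C_def using sorted_eigenvalue_diag_congruence_le[OF A symmetric k bounds nonzero] .
  moreover have "a \<le> b"
    using bounds[of 0] k by simp
  ultimately show ?thesis
    unfolding C_def using exists_factor_between[OF \<open>0 < a\<close>] by blast
qed

section \<open>Symmetrizable matrices\<close>

lemma sorted_eigenvalues_mult_mat_diag:
  fixes B :: "real mat"
  assumes B: "B \<in> carrier_mat n n" and positive: "\<And>i. i < n \<Longrightarrow> 0 < s i"
  defines "R \<equiv> mat_diag n (\<lambda>i. sqrt (s i))"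
  shows "sorted_eigenvalues (B * mat_diag n s) = sorted_eigenvalues (R * B * R)"
    and "sorted_eigenvalues (mat_diag n s * B) = sorted_eigenvalues (R * B * R)"
proof -
  have nonzero: "sqrt (s i) \<noteq> 0" "1 / sqrt (s i) \<noteq> 0" if "i < n" for i
    using positive[OF that] by auto
  have roots: "sqrt (s i) * sqrt (s i) = s i" "1 / sqrt (s i) * sqrt (s i) = 1" if "i < n" for i
    using positive[OF that] by auto
  have "mat_diag n (\<lambda>i. 1 / sqrt (s i)) * (R * B * R) * mat_diag n (\<lambda>i. 1 / (1 / sqrt (s i)))
      = 1\<^sub>m n * B * mat_diag n s"
    unfolding R_def mat_diag_conj_conj[OF B] mat_diag_one[symmetric]
    using roots by (intro arg_cong2[where f = "(*)"] arg_cong[where f = "(*) _"] mat_diag_cong) auto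
  then show "sorted_eigenvalues (B * mat_diag n s) = sorted_eigenvalues (R * B * R)"
    using similar_mat_diag_conj[of "R * B * R" n "\<lambda>i. 1 / sqrt (s i)"] nonzero B
    by (auto simp: R_def mult_carrier_mat[of _ n n _ n] sorted_eigenvalues_similar)
  have "mat_diag n (\<lambda>i. sqrt (s i)) * (R * B * R) * mat_diag n (\<lambda>i. 1 / sqrt (s i))
      = mat_diag n s * B * 1\<^sub>m n"
    unfolding R_def mat_diag_conj_conj[OF B] mat_diag_one[symmetric]
    using roots by (intro arg_cong2[where f = "(*)"] arg_cong[where f = "(*) _"] mat_diag_cong) auto
  then show "sorted_eigenvalues (mat_diag n s * B) = sorted_eigenvalues (R * B * R)"
    using similar_mat_diag_conj[of "R * B * R" n "\<lambda>i. sqrt (s i)"] nonzero B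
    by (auto simp: R_def mult_carrier_mat[of _ n n _ n] sorted_eigenvalues_similar)
qed

lemma sorted_eigenvalues_mult_pos_diag_mat:
  fixes B S :: "real mat"
  assumes B: "B \<in> carrier_mat n n" and S: "pos_diag_mat n S"
  shows "sorted_eigenvalues (B * S) = sorted_eigenvalues (diag_sqrt S * B * diag_sqrt S)"
    and "sorted_eigenvalues (S * B) = sorted_eigenvalues (diag_sqrt S * B * diag_sqrt S)"
proof -
  define s where "s i = S $$ (i, i)" for i
  have "S = mat_diag n s" and "diag_sqrt S = mat_diag n (\<lambda>i. sqrt (s i))"
    using pos_diag_mat_eq_mat_diag[OF S] unfolding s_def[abs_def] by - assumption+
  moreover have "0 < s i" if "i < n" for i
    using S that unfolding pos_diag_mat_def s_def by auto
  ultimately show "sorted_eigenvalues (B * S) = sorted_eigenvalues (diag_sqrt S * B * diag_sqrt S)"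
    and "sorted_eigenvalues (S * B) = sorted_eigenvalues (diag_sqrt S * B * diag_sqrt S)"
    using sorted_eigenvalues_mult_mat_diag[of B n s, OF B] by simp_all
qed

lemma symmetrizable_diag_conj_symmetric:
  fixes B :: "real mat"
  assumes B: "B \<in> carrier_mat n n" and "symmetrizable n B"
  obtains p where "\<And>i. i < n \<Longrightarrow> 0 < p i"
    and "transpose_mat (mat_diag n p * B * mat_diag n (\<lambda>i. 1 / p i))
      = mat_diag n p * B * mat_diag n (\<lambda>i. 1 / p i)"
proof -
  obtain D where D: "pos_diag_mat n D" and DB: "transpose_mat (D * B) = D * B"
    using \<open>symmetrizable n B\<close> unfolding symmetrizable_def by blast
  define d where "d i = D $$ (i, i)" for i
  define p where "p i = sqrt (d i)" for i
  have D_eq: "D = mat_diag n d"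
    using pos_diag_mat_eq_mat_diag(1)[OF D] unfolding d_def .
  have p: "0 < p i" "(p i)\<^sup>2 = d i" if "i < n" for i
    using D that unfolding pos_diag_mat_def p_def d_def by auto
  have balanced: "(p j)\<^sup>2 * B $$ (j, i) = (p i)\<^sup>2 * B $$ (i, j)" if "i < n" "j < n" for i j
    using arg_cong[OF DB, of "\<lambda>M. M $$ (i, j)"] that B p
    unfolding D_eq by (simp add: mat_diag_mult_left)
  have "transpose_mat (mat_diag n p * B * mat_diag n (\<lambda>i. 1 / p i))
      = mat_diag n p * B * mat_diag n (\<lambda>i. 1 / p i)"
  proof (rule eq_matI)
    fix i j assume "i < dim_row (mat_diag n p * B * mat_diag n (\<lambda>i. 1 / p i))"
      and "j < dim_col (mat_diag n p * B * mat_diag n (\<lambda>i. 1 / p i))"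
    then have i: "i < n" and j: "j < n" by simp_all
    show "transpose_mat (mat_diag n p * B * mat_diag n (\<lambda>i. 1 / p i)) $$ (i, j)
        = (mat_diag n p * B * mat_diag n (\<lambda>i. 1 / p i)) $$ (i, j)"
      using index_mat_diag_conj[OF B i j] index_mat_diag_conj[OF B j i] i j B
        balanced[OF i j] p[OF i] p[OF j]
      by (simp add: field_simps power2_eq_square)
  qed simp_all
  with p(1) show ?thesis
    using that by blast
qed

lemma sorted_eigenvalues_congruence_diag_conj:
  fixes B :: "real mat"
  assumes B: "B \<in> carrier_mat n n" and nonzero: "\<And>i. i < n \<Longrightarrow> p i \<noteq> 0"
  shows "sorted_eigenvalues (mat_diag n r * (mat_diag n p * B * mat_diag n (\<lambda>i. 1 / p i)) * mat_diag n r)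
    = sorted_eigenvalues (mat_diag n r * B * mat_diag n r)"
proof -
  have "mat_diag n r * (mat_diag n p * B * mat_diag n (\<lambda>i. 1 / p i)) * mat_diag n r
      = mat_diag n p * (mat_diag n r * B * mat_diag n r) * mat_diag n (\<lambda>i. 1 / p i)"
    unfolding mat_diag_conj_conj[OF B] by (simp add: ac_simps)
  moreover have "similar_mat (mat_diag n p * (mat_diag n r * B * mat_diag n r) * mat_diag n (\<lambda>i. 1 / p i))
      (mat_diag n r * B * mat_diag n r)"
    using B nonzero by (intro similar_mat_diag_conj) (auto simp: mult_carrier_mat[of _ n n _ n])
  ultimately show ?thesis
    by (simp add: sorted_eigenvalues_similar)
qed

lemma symmetrizable_symmetric_similar:
  fixes B :: "real mat"
  assumes B: "B \<in> carrier_mat n n" and "symmetrizable n B"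
  obtains A where "A \<in> carrier_mat n n" and "transpose_mat A = A"
    and "\<And>r. sorted_eigenvalues (mat_diag n r * A * mat_diag n r)
      = sorted_eigenvalues (mat_diag n r * B * mat_diag n r)"
proof -
  obtain p where p: "\<And>i. i < n \<Longrightarrow> 0 < p i"
    and symmetric: "transpose_mat (mat_diag n p * B * mat_diag n (\<lambda>i. 1 / p i))
      = mat_diag n p * B * mat_diag n (\<lambda>i. 1 / p i)"
    using symmetrizable_diag_conj_symmetric[OF assms] by blast
  have carrier: "mat_diag n p * B * mat_diag n (\<lambda>i. 1 / p i) \<in> carrier_mat n n"
    using B by (simp add: mult_carrier_mat[of _ n n _ n])
  have nonzero: "p i \<noteq> 0" if "i < n" for i
    using p[OF that] by simp
  show ?thesis
    by (rule that[OF carrier symmetric sorted_eigenvalues_congruence_diag_conj[OF B nonzero]])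
qed

theorem lemma5:
  fixes B S :: "real mat" and n :: nat
  assumes "B \<in> carrier_mat n n"
    and "symmetrizable n B"
    and "pos_diag_mat n S"
  shows "\<forall>k<n. \<exists>\<theta>.
           Min {S $$ (i,i) | i. i < n} \<le> \<theta> \<and> \<theta> \<le> Max {S $$ (i,i) | i. i < n} \<and>
           sorted_eigenvalues (B * S) ! k = sorted_eigenvalues (S * B) ! k \<and>
           sorted_eigenvalues (S * B) ! k = sorted_eigenvalues (diag_sqrt S * B * diag_sqrt S) ! k \<and>
           sorted_eigenvalues (diag_sqrt S * B * diag_sqrt S) ! k = \<theta> * sorted_eigenvalues B ! k"
proof (intro allI impI)
  fix k assume k: "k < n"
  define r where "r i = sqrt (S $$ (i, i))" for i
  obtain A where A: "A \<in> carrier_mat n n" "transpose_mat A = A"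
    and similar: "\<And>r. sorted_eigenvalues (mat_diag n r * A * mat_diag n r)
      = sorted_eigenvalues (mat_diag n r * B * mat_diag n r)"
    using symmetrizable_symmetric_similar[OF assms(1,2)] by blast
  have "diag_sqrt S = mat_diag n r"
    using pos_diag_mat_eq_mat_diag(2)[OF assms(3)] unfolding r_def[abs_def] .
  moreover have "sorted_eigenvalues B = sorted_eigenvalues A"
    using similar[of "\<lambda>_. 1"] assms(1) A(1) by simp
  moreover have "\<exists>\<theta>. Min {S $$ (i, i) | i. i < n} \<le> \<theta> \<and> \<theta> \<le> Max {S $$ (i, i) | i. i < n} \<and>
      sorted_eigenvalues (mat_diag n r * A * mat_diag n r) ! k = \<theta> * sorted_eigenvalues A ! k"
    unfolding r_def using pos_diag_mat_diagonal_bounds[OF assms(3)] assms(3) k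
    by (intro ostrowski_diag_congruence[OF A k]) (auto simp: pos_diag_mat_def less_imp_le)
  ultimately show "\<exists>\<theta>. Min {S $$ (i,i) | i. i < n} \<le> \<theta> \<and> \<theta> \<le> Max {S $$ (i,i) | i. i < n} \<and>
           sorted_eigenvalues (B * S) ! k = sorted_eigenvalues (S * B) ! k \<and>
           sorted_eigenvalues (S * B) ! k = sorted_eigenvalues (diag_sqrt S * B * diag_sqrt S) ! k \<and>
           sorted_eigenvalues (diag_sqrt S * B * diag_sqrt S) ! k = \<theta> * sorted_eigenvalues B ! k"
    using sorted_eigenvalues_mult_pos_diag_mat[OF assms(1,3)] similar[of r] by auto
qed

end
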